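(* Let $j\in\mathbb N$, let $J:(0,1]\to(0,\infty)$ be measurable with $\inf_{t\in(0,1]}J(t)/t>0$, and let $\|\cdot\|_{X(0,1)}$ be a rearrangement-invariant norm. (a) If $\int_0^1\frac{dr}{J(r)}<\infty$, then $\lim_{a\to0_+}\sup_{\|f\|_{L^\infty(0,1)}\le1}\|H^j_J(\chi_{(0,a)}f)\|_{X(0,1)}=0$ holds for all $j\in\mathbb N$ and all rearrangement-invariant norms $\|\cdot\|_{X(0,1)}$. If $\int_0^1\frac{dr}{J(r)}=\infty$, this condition holds if and only if $\lim_{a\to0_+}\big\|\chi_{(0,a)}(t)\big(\int_t^1\frac{dr}{J(r)}\big)^j\big\|_{X(0,1)}=0$. (b) $\lim_{a\to0_+}\sup_{\|f\|_{X(0,1)}\le1}\|H^j_J(\chi_{(0,a)}f)\|_{L^\infty(0,1)}=0$ holds if and only if $\lim_{a\to0_+}\Big\|\frac{\chi_{(0,a)}(t)}{J(t)}\big(\int_0^t\frac{dr}{J(r)}\big)^{j-1}\Big\|_{X'(0,1)}=0$. This is never the case when $\int_0^1\frac{dr}{J(r)}=\infty$.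
   Context: A rearrangement-invariant (r.i.) norm on $(0,1)$ is a functional $\|\cdot\|_{X(0,1)}$ on measurable functions with values in $[0,\infty]$ satisfying: for $f,g\ge0$, $a\ge0$, $\|f\|=0$ iff $f=0$ a.e., $\|af\|=a\|f\|$, $\|f+g\|\le\|f\|+\|g\|$; $f\le g$ a.e. $\Rightarrow\|f\|\le\|g\|$; $0\le f_k\uparrow f$ a.e. $\Rightarrow\|f_k\|\uparrow\|f\|$; $\|1\|<\infty$; $\int_0^1f\le C\|f\|$; equimeasurable functions have equal norm. Associate norm: $\|f\|_{X'(0,1)}=\sup_{\|g\|_{X(0,1)}\le1}\int_0^1|fg|$. Operator: $H^j_Jf(t)=\frac{1}{(j-1)!}\int_t^1\frac{|f(s)|}{J(s)}\big(\int_t^s\frac{dr}{J(r)}\big)^{j-1}ds$, $t\in(0,1)$. *)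

theory Defs
  imports "HOL-Analysis.Analysis"
begin

definition M01 :: "real measure" where
  "M01 = restrict_space lebesgue {0<..<1}"

text \<open>A rearrangement-invariant norm, given by its values on nonnegative
  (possibly infinite-valued) measurable functions on (0,1); the norm of a real
  function f is rho applied to the absolute value of f.\<close>
definition ri_norm :: "((real \<Rightarrow> ennreal) \<Rightarrow> ennreal) \<Rightarrow> bool" where
  "ri_norm \<rho> \<longleftrightarrow>
     (\<forall>f \<in> borel_measurable M01. \<rho> f = 0 \<longleftrightarrow> (AE t in M01. f t = 0)) \<and>
     (\<forall>f \<in> borel_measurable M01. \<forall>a::real. a \<ge> 0 \<longrightarrow>
         \<rho> (\<lambda>t. ennreal a * f t) = ennreal a * \<rho> f) \<and>
     (\<forall>f \<in> borel_measurable M01. \<forall>g \<in> borel_measurable M01.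
         \<rho> (\<lambda>t. f t + g t) \<le> \<rho> f + \<rho> g) \<and>
     (\<forall>f \<in> borel_measurable M01. \<forall>g \<in> borel_measurable M01.
         (AE t in M01. f t \<le> g t) \<longrightarrow> \<rho> f \<le> \<rho> g) \<and>
     (\<forall>fk f. (\<forall>k. fk k \<in> borel_measurable M01) \<longrightarrow> f \<in> borel_measurable M01 \<longrightarrow>
         (AE t in M01. incseq (\<lambda>k. fk k t) \<and> (\<lambda>k. fk k t) \<longlonglongrightarrow> f t) \<longrightarrow>
         (\<lambda>k. \<rho> (fk k)) \<longlonglongrightarrow> \<rho> f) \<and>
     \<rho> (\<lambda>_. 1) < \<infinity> \<and>
     (\<exists>C::real. \<forall>f \<in> borel_measurable M01. (\<integral>\<^sup>+ t. f t \<partial>M01) \<le> ennreal C * \<rho> f) \<and>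
     (\<forall>f \<in> borel_measurable M01. \<forall>g \<in> borel_measurable M01.
         (\<forall>y::ennreal. emeasure M01 {t \<in> space M01. y < f t}
                       = emeasure M01 {t \<in> space M01. y < g t}) \<longrightarrow> \<rho> f = \<rho> g)"

definition assoc_norm :: "((real \<Rightarrow> ennreal) \<Rightarrow> ennreal) \<Rightarrow> (real \<Rightarrow> ennreal) \<Rightarrow> ennreal" where
  "assoc_norm \<rho> f = (SUP g \<in> {g \<in> borel_measurable M01. \<rho> g \<le> 1}. \<integral>\<^sup>+ t. f t * g t \<partial>M01)"

definition Linf :: "(real \<Rightarrow> ennreal) \<Rightarrow> ennreal" where
  "Linf g = Inf {c. AE t in M01. g t \<le> c}"

definition Hop :: "nat \<Rightarrow> (real \<Rightarrow> real) \<Rightarrow> (real \<Rightarrow> real) \<Rightarrow> real \<Rightarrow> ennreal" where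
  "Hop j J f t = ennreal (1 / fact (j - 1)) *
     (\<integral>\<^sup>+ s \<in> {t<..<1}. ennreal (\<bar>f s\<bar> / J s) *
         (\<integral>\<^sup>+ r \<in> {t<..<s}. ennreal (1 / J r) \<partial>lebesgue) ^ (j - 1) \<partial>lebesgue)"

end

theory Submission
  imports Defs
begin

text \<open>Write \<open>G(t,s)\<close> for the integral of \<open>1/J\<close> over \<open>(t,s)\<close>, so that \<open>(j-1)! H\<^sup>j\<^sub>J f(t)\<close> is the
  integral of \<open>|f(s)| G(t,s)\<^sup>j\<^sup>-\<^sup>1\<close> against \<open>dG(t,s)\<close> over \<open>s > t\<close>. If \<open>|f|\<close> is at most the indicator
  of \<open>(0,a)\<close>, this is at most \<open>G(t,a)\<^sup>j\<close>; if \<open>f\<close> is the indicator of \<open>(0,b)\<close>, it is at least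
  \<open>(G(t,b)/2)\<^sup>j\<close>, by splitting \<open>(t,b)\<close> at the point where \<open>G(t,\<cdot>)\<close> reaches half of \<open>G(t,b)\<close>.

  If \<open>G(0,1) < \<infinity>\<close>, the upper bound is a constant times \<open>G(0,a)\<close>, which tends to \<open>0\<close>. If
  \<open>G(0,1) = \<infinity>\<close>, the upper bound is the tail function \<open>G(t,1)\<^sup>j\<close> on \<open>(0,a)\<close>; conversely,
  \<open>G(t,1) \<le> 2 G(t,b)\<close> for small \<open>t\<close>, so the tail function is dominated by \<open>H\<^sup>j\<^sub>J\<close> of the indicator of
  \<open>(0,b)\<close>.

  For (b), \<open>H\<^sup>j\<^sub>J f\<close> is nonincreasing, so its essential supremum is its limit at \<open>0+\<close>, which by
  monotone convergence is the pairing of \<open>|f|\<close> with \<open>G(0,t)\<^sup>j\<^sup>-\<^sup>1/J(t)\<close> on \<open>(0,a)\<close>. The supremum over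
  the unit ball of \<open>X\<close> is therefore an associate norm, and that norm is infinite when \<open>G(0,1) = \<infinity>\<close>.\<close>

lemma borel_measurable_antimono_ennreal:
  fixes \<phi> :: "real \<Rightarrow> ennreal"
  assumes "antimono \<phi>"
  shows "\<phi> \<in> borel_measurable borel"
proof (rule borel_measurableI_greater)
  fix y
  have "is_interval {x. y < \<phi> x}"
    using assms unfolding is_interval_1 by (auto dest: antimonoD intro: less_le_trans)
  then show "{x \<in> space borel. y < \<phi> x} \<in> sets borel"
    using real_interval_borel_measurable by simp
qed

lemma borel_measurable_mono_ennreal:
  fixes \<phi> :: "real \<Rightarrow> ennreal"
  assumes "mono \<phi>"
  shows "\<phi> \<in> borel_measurable borel"
proof (rule borel_measurableI_greater)
  fix y
  have "is_interval {x. y < \<phi> x}"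
    using assms unfolding is_interval_1 by (auto dest: monoD intro: less_le_trans)
  then show "{x \<in> space borel. y < \<phi> x} \<in> sets borel"
    using real_interval_borel_measurable by simp
qed

lemma SUP_power_ennreal:
  fixes x :: "nat \<Rightarrow> ennreal"
  assumes "incseq x"
  shows "(SUP n. x n) ^ k = (SUP n. x n ^ k)"
proof (induction k)
  case 0 then show ?case by simp
next
  case (Suc k)
  have "(SUP n. x n) ^ Suc k = (SUP n. SUP m. x n * x m ^ k)"
    by (simp add: Suc SUP_mult_left_ennreal SUP_mult_right_ennreal, subst SUP_commute, rule refl)
  also have "\<dots> = (SUP n. x n ^ Suc k)"
  proof (rule antisym)
    show "(SUP n. SUP m. x n * x m ^ k) \<le> (SUP n. x n ^ Suc k)"
    proof (intro SUP_least)
      fix n m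
      have "x n * x m ^ k \<le> x (max n m) * x (max n m) ^ k"
        using assms by (intro mult_mono power_mono_ennreal) (auto simp: incseq_def)
      then show "x n * x m ^ k \<le> (SUP n. x n ^ Suc k)"
        by (intro SUP_upper2[of "max n m"]) auto
    qed
    show "(SUP n. x n ^ Suc k) \<le> (SUP n. SUP m. x n * x m ^ k)"
      by (intro SUP_least SUP_upper2) auto
  qed
  finally show ?case .
qed

lemma ennreal_half_plus_half: "x / 2 + x / 2 = (x :: ennreal)"
proof -
  have "(2::ennreal) / 2 = 1" by simp
  then show ?thesis by (metis ennreal_divide_times mult_2_right mult_1_right)
qed

lemma tendsto_cmult_ennreal_iff:
  fixes c :: ennreal
  assumes "c \<noteq> 0" "c \<noteq> \<infinity>"
  shows "((\<lambda>x. c * f x) \<longlongrightarrow> 0) F \<longleftrightarrow> (f \<longlongrightarrow> 0) F"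
proof
  have c: "inverse c * c = 1"
    using assms by (simp add: mult.commute divide_ennreal_def[symmetric] top.not_eq_extremum)
  assume "((\<lambda>x. c * f x) \<longlongrightarrow> 0) F"
  from ennreal_tendsto_cmult[OF _ this, of "inverse c"] assms
  show "(f \<longlongrightarrow> 0) F"
    by (simp add: mult.assoc[symmetric] c less_top[symmetric])
next
  assume "(f \<longlongrightarrow> 0) F"
  from ennreal_tendsto_cmult[OF _ this, of c] assms
  show "((\<lambda>x. c * f x) \<longlongrightarrow> 0) F" by (simp add: top.not_eq_extremum)
qed

lemma tendsto_emeasure_Ioo_at_right:
  fixes N :: "real measure"
  assumes sets: "\<And>x y. {x<..<y} \<in> sets N"
  shows "((\<lambda>x. emeasure N {x<..<b}) \<longlongrightarrow> emeasure N {a<..<b}) (at_right a)"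
proof (rule tendsto_at_right_sequentially[of a "a + 1"])
  fix S :: "nat \<Rightarrow> real"
  assume S: "\<And>n. a < S n" "decseq S" "S \<longlonglongrightarrow> a"
  have "(\<Union>n. {S n<..<b}) = {a<..<b}"
  proof safe
    fix x assume x: "x \<in> {a<..<b}"
    then have "eventually (\<lambda>n. S n < x) sequentially"
      using S(3) by (intro order_tendstoD) auto
    then obtain n where "S n < x" by (auto dest: eventually_happens)
    with x show "x \<in> (\<Union>n. {S n<..<b})" by auto
  qed (use S(1) less_trans in auto)
  moreover have "incseq (\<lambda>n. {S n<..<b})"
    using S(2) by (fastforce simp: incseq_def decseq_def intro: le_less_trans)
  ultimately show "(\<lambda>n. emeasure N {S n<..<b}) \<longlonglongrightarrow> emeasure N {a<..<b}"
    using Lim_emeasure_incseq[of "\<lambda>n. {S n<..<b}" N] sets by (simp add: image_subset_iff)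
qed simp

lemma tendsto_emeasure_Ioo_at_left:
  fixes N :: "real measure"
  assumes sets: "\<And>x y. {x<..<y} \<in> sets N"
  shows "((\<lambda>x. emeasure N {a<..<x}) \<longlongrightarrow> emeasure N {a<..<b}) (at_left b)"
proof (rule tendsto_at_left_sequentially[of "b - 1" b])
  fix S :: "nat \<Rightarrow> real"
  assume S: "\<And>n. S n < b" "incseq S" "S \<longlonglongrightarrow> b"
  have "(\<Union>n. {a<..<S n}) = {a<..<b}"
  proof safe
    fix x assume x: "x \<in> {a<..<b}"
    then have "eventually (\<lambda>n. x < S n) sequentially"
      using S(3) by (intro order_tendstoD) auto
    then obtain n where "x < S n" by (auto dest: eventually_happens)
    with x show "x \<in> (\<Union>n. {a<..<S n})" by auto
  qed (use S(1) less_trans in auto)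
  moreover have "incseq (\<lambda>n. {a<..<S n})"
    using S(2) by (fastforce simp: incseq_def intro: less_le_trans)
  ultimately show "(\<lambda>n. emeasure N {a<..<S n}) \<longlonglongrightarrow> emeasure N {a<..<b}"
    using Lim_emeasure_incseq[of "\<lambda>n. {a<..<S n}" N] sets by (simp add: image_subset_iff)
qed simp

lemma tendsto_emeasure_Ioo_at_right_zero:
  fixes N :: "real measure"
  assumes sets: "\<And>x y. {x<..<y} \<in> sets N"
    and "a < b" and fin: "emeasure N {a<..<b} \<noteq> \<infinity>"
  shows "((\<lambda>x. emeasure N {a<..<x}) \<longlongrightarrow> 0) (at_right a)"
proof (rule tendsto_at_right_sequentially[OF \<open>a < b\<close>])
  fix S :: "nat \<Rightarrow> real"
  assume S: "\<And>n. a < S n" "\<And>n. S n < b" "decseq S" "S \<longlonglongrightarrow> a"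
  have "(\<Inter>n. {a<..<S n}) = {}"
  proof safe
    fix x assume x: "x \<in> (\<Inter>n. {a<..<S n})"
    then have "a < x" by auto
    then have "eventually (\<lambda>n. S n < x) sequentially"
      using S(4) by (intro order_tendstoD)
    then obtain n where "S n < x" by (auto dest: eventually_happens)
    with x show "x \<in> {}" by (meson INT_E greaterThanLessThan_iff not_less_iff_gr_or_eq UNIV_I)
  qed
  moreover have "decseq (\<lambda>n. {a<..<S n})"
    using S(3) by (fastforce simp: decseq_def intro: less_le_trans)
  moreover have "emeasure N {a<..<S n} \<noteq> \<infinity>" for n
  proof -
    have "emeasure N {a<..<S n} \<le> emeasure N {a<..<b}"
      using S(2)[of n] sets by (intro emeasure_mono) auto
    then show ?thesis using fin by (auto simp: top_unique)
  qed
  ultimately show "(\<lambda>n. emeasure N {a<..<S n}) \<longlonglongrightarrow> 0"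
    using Lim_emeasure_decseq[of "\<lambda>n. {a<..<S n}" N] sets by (simp add: image_subset_iff)
qed

lemma borel_measurable_lebesgue_of_borel:
  "f \<in> borel_measurable borel \<Longrightarrow> f \<in> borel_measurable lebesgue"
  by (metis measurable_lborel2 measurable_completion)

lemma space_M01 [simp]: "space M01 = {0<..<1}"
  by (simp add: M01_def)

lemma AE_M01_iff: "(AE x in M01. P x) \<longleftrightarrow> (AE x in lebesgue. x \<in> {0<..<1} \<longrightarrow> P x)"
  unfolding M01_def by (rule AE_restrict_space_iff) simp

lemma nn_integral_M01: "(\<integral>\<^sup>+ x. f x \<partial>M01) = (\<integral>\<^sup>+ x. f x * indicator {0<..<1} x \<partial>lebesgue)"
  unfolding M01_def by (rule nn_integral_restrict_space) simp

lemma measurable_M01_cong: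
  assumes "\<And>t. t \<in> {0<..<1} \<Longrightarrow> f t = g t" and "g \<in> borel_measurable lebesgue"
  shows "f \<in> borel_measurable M01"
proof -
  have "g \<in> borel_measurable M01"
    unfolding M01_def using assms(2) by (rule measurable_restrict_space1)
  then show ?thesis
    by (rule measurable_cong[THEN iffD1, rotated]) (simp add: assms(1))
qed

lemma AE_le_Linf: "AE t in M01. g t \<le> Linf g"
proof (cases "{c. AE t in M01. g t \<le> c} = {}")
  case True
  then show ?thesis by (simp add: Linf_def)
next
  case False
  from Inf_as_limit[OF this] obtain c
    where c: "\<And>n. AE t in M01. g t \<le> c n" and lim: "c \<longlonglongrightarrow> Linf g"
    unfolding Linf_def by auto
  have "AE t in M01. \<forall>n. g t \<le> c n"
    using c by (simp add: AE_all_countable)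
  then show ?thesis
    by (rule eventually_mono) (use LIMSEQ_le_const[OF lim] in blast)
qed

lemma Linf_const_le: "Linf (\<lambda>_. c) \<le> c"
  unfolding Linf_def by (rule Inf_lower) simp

lemma Linf_eq_SUP_antimono:
  assumes anti: "\<And>x y. 0 < x \<Longrightarrow> x \<le> y \<Longrightarrow> y < 1 \<Longrightarrow> \<phi> y \<le> \<phi> x"
  shows "Linf \<phi> = (SUP t \<in> {0<..<1}. \<phi> t)"
proof (rule antisym)
  show "Linf \<phi> \<le> (SUP t \<in> {0<..<1}. \<phi> t)"
    unfolding Linf_def by (rule Inf_lower) (auto simp: AE_M01_iff intro!: SUP_upper)
  show "(SUP t \<in> {0<..<1}. \<phi> t) \<le> Linf \<phi>"
  proof (intro SUP_least)
    fix t :: real assume t: "t \<in> {0<..<1}"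
    show "\<phi> t \<le> Linf \<phi>"
    proof (rule ccontr)
      assume "\<not> \<phi> t \<le> Linf \<phi>"
      then have "\<forall>x\<in>{0<..<t}. \<not> \<phi> x \<le> Linf \<phi>"
        using anti t by (meson greaterThanLessThan_iff less_imp_le order_trans)
      then have "AE x in lebesgue. x \<notin> {0<..<t}"
        using AE_le_Linf[of \<phi>] t unfolding AE_M01_iff by (auto elim!: eventually_mono)
      then have "{0<..<t} \<in> null_sets lebesgue"
        by (subst AE_iff_null_sets) auto
      then show False using t by (auto simp: null_sets_def)
    qed
  qed
qed

section \<open>Rearrangement-invariant norms\<close>

context
  fixes \<rho> :: "(real \<Rightarrow> ennreal) \<Rightarrow> ennreal"
  assumes X: "ri_norm \<rho>"
begin

lemma ri_norm_mono:
  assumes "f \<in> borel_measurable M01" "g \<in> borel_measurable M01"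
    and "\<And>t. t \<in> {0<..<1} \<Longrightarrow> f t \<le> g t"
  shows "\<rho> f \<le> \<rho> g"
proof -
  have "AE t in M01. f t \<le> g t" by (rule AE_I2) (use assms(3) in simp)
  then show ?thesis using X assms(1,2) unfolding ri_norm_def by blast
qed

lemma ri_norm_cmult:
  assumes "f \<in> borel_measurable M01" "c \<noteq> \<infinity>"
  shows "\<rho> (\<lambda>t. c * f t) = c * \<rho> f"
proof -
  have hom: "\<rho> (\<lambda>t. ennreal a * f t) = ennreal a * \<rho> f" if "0 \<le> a" for a
    using X assms(1) that unfolding ri_norm_def by blast
  obtain a where "c = ennreal a" "0 \<le> a"
    using assms(2) by (cases c) auto
  then show ?thesis
    using hom by simp
qed

lemma ri_norm_one_finite: "\<rho> (\<lambda>_. 1) \<noteq> \<infinity>"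
proof -
  have "\<rho> (\<lambda>_. 1) < \<infinity>"
    using X unfolding ri_norm_def by blast
  then show ?thesis by simp
qed

lemma ri_norm_one_nonzero: "\<rho> (\<lambda>_. 1) \<noteq> 0"
proof
  assume "\<rho> (\<lambda>_. 1) = 0"
  then have "AE t in M01. False"
    using X borel_measurable_const[of "1::ennreal"] unfolding ri_norm_def by auto
  then have "emeasure M01 (space M01) = 0"
    by (metis ae_filter_eq_bot_iff trivial_limit_def)
  moreover have "emeasure M01 (space M01) = 1"
    unfolding space_M01 M01_def by (subst emeasure_restrict_space) auto
  ultimately show False by simp
qed

lemma ri_norm_const: "c \<noteq> \<infinity> \<Longrightarrow> \<rho> (\<lambda>_. c) = c * \<rho> (\<lambda>_. 1)"
  using ri_norm_cmult[of "\<lambda>_. 1" c] by simp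

text \<open>A test function of finite norm is integrable, hence finite almost everywhere, so it may be
  replaced by a real-valued one.\<close>
lemma assoc_norm_eq_SUP_abs:
  "assoc_norm \<rho> g =
    (SUP f\<in>{f \<in> borel_measurable M01. \<rho> (\<lambda>t. ennreal \<bar>f t\<bar>) \<le> 1}. \<integral>\<^sup>+ t. ennreal \<bar>f t\<bar> * g t \<partial>M01)"
  unfolding assoc_norm_def
proof (rule antisym)
  show "(SUP h\<in>{h \<in> borel_measurable M01. \<rho> h \<le> 1}. \<integral>\<^sup>+ t. g t * h t \<partial>M01)
    \<le> (SUP f\<in>{f \<in> borel_measurable M01. \<rho> (\<lambda>t. ennreal \<bar>f t\<bar>) \<le> 1}. \<integral>\<^sup>+ t. ennreal \<bar>f t\<bar> * g t \<partial>M01)"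
  proof (intro SUP_least)
    fix h assume "h \<in> {h \<in> borel_measurable M01. \<rho> h \<le> 1}"
    then have hm: "h \<in> borel_measurable M01" and h1: "\<rho> h \<le> 1" by auto
    define f where "f t = enn2real (h t)" for t
    have fm: "f \<in> borel_measurable M01" unfolding f_def using hm by measurable
    have "ennreal \<bar>f t\<bar> \<le> h t" for t
      unfolding f_def by (cases "h t = \<infinity>") (auto simp: top.not_eq_extremum)
    then have "\<rho> (\<lambda>t. ennreal \<bar>f t\<bar>) \<le> \<rho> h"
      using fm hm by (intro ri_norm_mono) auto
    then have f_in: "f \<in> {f \<in> borel_measurable M01. \<rho> (\<lambda>t. ennreal \<bar>f t\<bar>) \<le> 1}"
      using fm h1 by auto
    obtain C where "(\<integral>\<^sup>+ t. h t \<partial>M01) \<le> ennreal C * \<rho> h"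
      using X hm unfolding ri_norm_def by blast
    also have "\<dots> \<le> ennreal C" using h1 by (simp add: mult_left_le)
    finally have "AE t in M01. h t \<noteq> \<infinity>"
      using hm by (intro nn_integral_PInf_AE) (auto simp: top_unique)
    then have "(\<integral>\<^sup>+ t. g t * h t \<partial>M01) = (\<integral>\<^sup>+ t. ennreal \<bar>f t\<bar> * g t \<partial>M01)"
      by (intro nn_integral_cong_AE) (auto elim!: eventually_mono simp: f_def mult.commute top.not_eq_extremum)
    also have "\<dots> \<le> (SUP f\<in>{f \<in> borel_measurable M01. \<rho> (\<lambda>t. ennreal \<bar>f t\<bar>) \<le> 1}. \<integral>\<^sup>+ t. ennreal \<bar>f t\<bar> * g t \<partial>M01)"
      using f_in by (rule SUP_upper)
    finally show "(\<integral>\<^sup>+ t. g t * h t \<partial>M01) \<le> \<dots>" .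
  qed
  show "(SUP f\<in>{f \<in> borel_measurable M01. \<rho> (\<lambda>t. ennreal \<bar>f t\<bar>) \<le> 1}. \<integral>\<^sup>+ t. ennreal \<bar>f t\<bar> * g t \<partial>M01)
    \<le> (SUP h\<in>{h \<in> borel_measurable M01. \<rho> h \<le> 1}. \<integral>\<^sup>+ t. g t * h t \<partial>M01)"
    by (intro SUP_least SUP_upper2[of "\<lambda>t. ennreal \<bar>f t\<bar>" for f]) (auto simp: mult.commute)
qed

lemma assoc_norm_infinite:
  assumes "g \<in> borel_measurable M01" "(\<integral>\<^sup>+ t. g t \<partial>M01) = \<infinity>"
  shows "assoc_norm \<rho> g = \<infinity>"
proof -
  define c where "c = inverse (\<rho> (\<lambda>_. 1))"
  have c: "c \<noteq> 0" "c \<noteq> \<infinity>"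
    using ri_norm_one_finite ri_norm_one_nonzero unfolding c_def by auto
  have "\<rho> (\<lambda>_. c) = c * \<rho> (\<lambda>_. 1)"
    using c(2) by (rule ri_norm_const)
  also have "\<dots> = \<rho> (\<lambda>_. 1) / \<rho> (\<lambda>_. 1)"
    unfolding c_def divide_ennreal_def by (rule mult.commute)
  also have "\<dots> = 1"
    using ri_norm_one_finite ri_norm_one_nonzero by (simp add: less_top[symmetric])
  finally have "(\<integral>\<^sup>+ t. g t * c \<partial>M01) \<le> assoc_norm \<rho> g"
    unfolding assoc_norm_def by (intro SUP_upper) auto
  moreover have "(\<integral>\<^sup>+ t. g t * c \<partial>M01) = \<infinity>"
    using assms c by (simp add: nn_integral_multc ennreal_top_mult)
  ultimately show ?thesis by (simp add: top_unique)
qed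

end

section \<open>The measure with density \<open>1/J\<close>\<close>

locale inverse_weight =
  fixes J :: "real \<Rightarrow> real"
  assumes J_measurable: "J \<in> borel_measurable (restrict_space lebesgue {0<..1})"
begin

text \<open>\<open>Jlen t s\<close> is the integral of \<open>1/J\<close> over \<open>(t,s) \<inter> (0,1)\<close>, taken as a measure so that
  additivity and continuity in the endpoints come from measure theory.\<close>
definition Jdens :: "real \<Rightarrow> ennreal" where
  "Jdens r = indicator {0<..<1} r * ennreal (1 / J r)"

definition Jlen :: "real \<Rightarrow> real \<Rightarrow> ennreal" where
  "Jlen t s = emeasure (density lebesgue Jdens) {t<..<s}"

lemma Jdens_measurable [measurable]: "Jdens \<in> borel_measurable lebesgue"
proof -
  have "(\<lambda>r. ennreal (1 / J r)) \<in> borel_measurable (restrict_space lebesgue {0<..1})"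
    using J_measurable by measurable
  then have "(\<lambda>r. ennreal (1 / J r)) \<in> borel_measurable (restrict_space lebesgue {0<..<1})"
    by (rule measurable_restrict_mono) auto
  then have "(\<lambda>r. ennreal (1 / J r) * indicator {0<..<1} r) \<in> borel_measurable lebesgue"
    by (subst (asm) borel_measurable_restrict_space_iff_ennreal) auto
  then show ?thesis unfolding Jdens_def by (simp add: mult.commute)
qed

lemma Jlen_eq_nn_integral: "Jlen t s = (\<integral>\<^sup>+ r. Jdens r * indicator {t<..<s} r \<partial>lebesgue)"
  unfolding Jlen_def by (rule emeasure_density) auto

lemma nn_integral_inverse_J_eq_Jlen:
  "0 \<le> t \<Longrightarrow> s \<le> 1 \<Longrightarrow> (\<integral>\<^sup>+ r\<in>{t<..<s}. ennreal (1 / J r) \<partial>lebesgue) = Jlen t s"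
  unfolding Jlen_eq_nn_integral by (intro nn_integral_cong) (auto simp: Jdens_def indicator_def)

lemma Jlen_mono: "t' \<le> t \<Longrightarrow> s \<le> s' \<Longrightarrow> Jlen t s \<le> Jlen t' s'"
  unfolding Jlen_def by (intro emeasure_mono) auto

lemma Jlen_empty: "s \<le> t \<Longrightarrow> Jlen t s = 0"
  unfolding Jlen_def by simp

lemma Jlen_add:
  assumes "t \<le> m" "m \<le> s"
  shows "Jlen t s = Jlen t m + Jlen m s"
proof (cases "t = m \<or> m = s")
  case True
  then show ?thesis by (auto simp: Jlen_empty)
next
  case False
  let ?N = "density lebesgue Jdens"
  have "emeasure ?N {m} = 0"
    by (subst emeasure_density) (auto intro!: nn_integral_null_set)
  moreover have "emeasure ?N {m..<s} = emeasure ?N {m} + emeasure ?N {m<..<s}"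
    using False assms by (subst plus_emeasure) (auto intro!: arg_cong[where f="emeasure ?N"])
  moreover have "Jlen t s = emeasure ?N {t<..<m} + emeasure ?N {m..<s}"
    using False assms unfolding Jlen_def
    by (subst plus_emeasure) (auto intro!: arg_cong[where f="emeasure ?N"])
  ultimately show ?thesis by (simp add: Jlen_def)
qed

lemma Jlen_tendsto_lower: "((\<lambda>x. Jlen x s) \<longlongrightarrow> Jlen t s) (at_right t)"
  unfolding Jlen_def by (rule tendsto_emeasure_Ioo_at_right) simp

lemma Jlen_tendsto_upper: "((\<lambda>x. Jlen t x) \<longlongrightarrow> Jlen t s) (at_left s)"
  unfolding Jlen_def by (rule tendsto_emeasure_Ioo_at_left) simp

lemma Jlen_tendsto_zero: "t < s \<Longrightarrow> Jlen t s \<noteq> \<infinity> \<Longrightarrow> ((\<lambda>x. Jlen t x) \<longlongrightarrow> 0) (at_right t)"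
  unfolding Jlen_def by (rule tendsto_emeasure_Ioo_at_right_zero) auto

lemma Jlen_eq_SUP_lower:
  assumes "decseq e" "e \<longlonglongrightarrow> t" "\<And>n. t < e n"
  shows "Jlen t s = (SUP n. Jlen (e n) s)"
proof (rule LIMSEQ_unique)
  have "filterlim e (at_right t) sequentially"
    using assms by (intro tendsto_imp_filterlim_at_right) auto
  then show "(\<lambda>n. Jlen (e n) s) \<longlonglongrightarrow> Jlen t s"
    by (rule filterlim_compose[OF Jlen_tendsto_lower])
  show "(\<lambda>n. Jlen (e n) s) \<longlonglongrightarrow> (SUP n. Jlen (e n) s)"
    using assms(1) by (intro LIMSEQ_SUP) (auto simp: incseq_def decseq_def intro: Jlen_mono)
qed


section \<open>The operator \<open>H\<^sup>j\<^sub>J\<close>\<close>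

definition Hnn :: "nat \<Rightarrow> (real \<Rightarrow> ennreal) \<Rightarrow> real \<Rightarrow> ennreal" where
  "Hnn j u t = (\<integral>\<^sup>+ s. u s * Jdens s * Jlen t s ^ (j - 1) * indicator {t<..<1} s \<partial>lebesgue)"

lemma Hop_eq_Hnn:
  assumes "t \<in> {0<..<1}"
  shows "Hop j J f t = ennreal (1 / fact (j - 1)) * Hnn j (\<lambda>s. ennreal \<bar>f s\<bar>) t"
proof -
  have "ennreal (\<bar>f s\<bar> / J s) * (\<integral>\<^sup>+ r\<in>{t<..<s}. ennreal (1 / J r) \<partial>lebesgue) ^ (j - 1) * indicator {t<..<1} s
      = ennreal \<bar>f s\<bar> * Jdens s * Jlen t s ^ (j - 1) * indicator {t<..<1} s" for s
    using assms ennreal_mult'[of "\<bar>f s\<bar>" "1 / J s"]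
    by (cases "s \<in> {t<..<1}") (auto simp: nn_integral_inverse_J_eq_Jlen Jdens_def)
  then show ?thesis
    unfolding Hop_def Hnn_def by (simp add: nn_integral_set_ennreal)
qed

lemma Hnn_integrand_antimono:
  "t \<le> t' \<Longrightarrow> u s * Jdens s * Jlen t' s ^ k * indicator {t'<..<1} s
    \<le> u s * Jdens s * Jlen t s ^ k * indicator {t<..<1} s"
  by (cases "s \<in> {t'<..<1}") (auto intro!: mult_left_mono power_mono_ennreal Jlen_mono)

lemma Hnn_antimono: "antimono (Hnn j u)"
  unfolding Hnn_def by (intro antimonoI nn_integral_mono Hnn_integrand_antimono)

lemma Hop_measurable: "Hop j J f \<in> borel_measurable M01"
  by (rule measurable_M01_cong[OF Hop_eq_Hnn], assumption)
     (intro borel_measurable_lebesgue_of_borel borel_measurable_times_ennreal borel_measurable_const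
        borel_measurable_antimono_ennreal[OF Hnn_antimono])

lemma Hop_antimono: "0 < x \<Longrightarrow> x \<le> y \<Longrightarrow> y < 1 \<Longrightarrow> Hop j J f y \<le> Hop j J f x"
  by (simp add: Hop_eq_Hnn mult_left_mono antimonoD[OF Hnn_antimono])

lemma Hnn_le_Jlen_power:
  assumes j: "j \<ge> 1"
    and u: "AE s in lebesgue. s \<in> {t<..<1} \<longrightarrow> u s \<le> indicator {..<b} s"
  shows "Hnn j u t \<le> Jlen t b ^ j"
proof -
  have "Hnn j u t \<le> (\<integral>\<^sup>+ s. Jlen t b ^ (j - 1) * (Jdens s * indicator {t<..<b} s) \<partial>lebesgue)"
    unfolding Hnn_def
  proof (intro nn_integral_mono_AE, use u in \<open>eventually_elim\<close>)
    fix s assume us: "s \<in> {t<..<1} \<longrightarrow> u s \<le> indicator {..<b} s"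
    show "u s * Jdens s * Jlen t s ^ (j - 1) * indicator {t<..<1} s
        \<le> Jlen t b ^ (j - 1) * (Jdens s * indicator {t<..<b} s)"
    proof (cases "s \<in> {t<..<1} \<and> s < b")
      case True
      then have "u s * Jdens s * Jlen t s ^ (j - 1) \<le> 1 * Jdens s * Jlen t b ^ (j - 1)"
        using us by (intro mult_mono power_mono_ennreal Jlen_mono) auto
      then show ?thesis using True by (simp add: ac_simps)
    qed (use us in \<open>auto simp: indicator_def\<close>)
  qed
  also have "\<dots> = Jlen t b ^ (j - 1) * Jlen t b"
    unfolding Jlen_eq_nn_integral
    by (intro nn_integral_cmult borel_measurable_times_ennreal Jdens_measurable borel_measurable_indicator) simp
  also have "\<dots> = Jlen t b ^ j"
    using j power_minus_mult[of j "Jlen t b"] by simp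
  finally show ?thesis .
qed

text \<open>Splitting \<open>(t,b)\<close> at a point \<open>m\<close> where \<open>Jlen t\<close> passes half of \<open>Jlen t b\<close> replaces the exact
  identity \<open>\<integral> Jlen t s ^ (j-1) dJlen t s = Jlen t b ^ j / j\<close>.\<close>
lemma Jlen_halving_point:
  assumes "t < b" "Jlen t b \<noteq> \<infinity>"
  obtains m where "t \<le> m" "m \<le> b" "Jlen t b / 2 \<le> Jlen m b" "\<And>s. m < s \<Longrightarrow> s \<le> b \<Longrightarrow> Jlen t b / 2 \<le> Jlen t s"
proof -
  define H where "H = Jlen t b / 2"
  define S where "S = {s. t \<le> s \<and> s \<le> b \<and> Jlen t s \<le> H}"
  define m where "m = Sup S"
  have tS: "t \<in> S" unfolding S_def using assms by (auto simp: Jlen_empty)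
  have bdd: "bdd_above S" unfolding S_def by (auto intro: bdd_aboveI[of _ b])
  have tm: "t \<le> m" unfolding m_def using tS bdd by (rule cSup_upper)
  have mb: "m \<le> b" unfolding m_def using tS by (intro cSup_least) (auto simp: S_def)
  have above: "H \<le> Jlen t s" if "m < s" "s \<le> b" for s
  proof (rule ccontr)
    assume "\<not> H \<le> Jlen t s"
    then have "s \<in> S"
      using that tm unfolding S_def by auto
    then have "s \<le> m" unfolding m_def using bdd by (rule cSup_upper)
    then show False using that by simp
  qed
  have "Jlen t m \<le> H"
  proof (cases "t = m")
    case False
    then have "t < m" using tm by simp
    have "eventually (\<lambda>s. Jlen t s \<le> H) (at_left m)"
      unfolding eventually_at_left[OF \<open>t < m\<close>]
    proof (intro exI[of _ t] conjI \<open>t < m\<close> allI impI)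
      fix s assume s: "t < s" "s < m"
      then obtain s' where s': "s' \<in> S" "s < s'"
        using less_cSup_iff[of S s] tS bdd unfolding m_def by auto
      then show "Jlen t s \<le> H"
        using Jlen_mono[of t t s s'] unfolding S_def by auto
    qed
    then show ?thesis
      by (rule tendsto_upperbound[OF Jlen_tendsto_upper]) simp
  qed (simp add: Jlen_empty)
  then have "H + H \<le> H + Jlen m b"
    using Jlen_add[OF tm mb] ennreal_half_plus_half[of "Jlen t b"]
    unfolding H_def by (metis add_right_mono)
  then have "H \<le> Jlen m b"
    using assms(2) unfolding H_def by (simp add: ennreal_add_left_cancel_le ennreal_divide_eq_top_iff)
  then show ?thesis
    using that tm mb above unfolding H_def by blast
qed

lemma Jlen_power_le_Hnn:
  assumes j: "j \<ge> 1" and "t < b" "b \<le> 1" "Jlen t b \<noteq> \<infinity>"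
    and u: "\<And>s. t < s \<Longrightarrow> s < b \<Longrightarrow> 1 \<le> u s"
  shows "Jlen t b ^ j \<le> 2 ^ j * Hnn j u t"
proof -
  define H where "H = Jlen t b / 2"
  obtain m where m: "t \<le> m" "m \<le> b" "H \<le> Jlen m b" "\<And>s. m < s \<Longrightarrow> s \<le> b \<Longrightarrow> H \<le> Jlen t s"
    using Jlen_halving_point[OF assms(2,4)] unfolding H_def by blast
  have "H ^ j = H ^ (j - 1) * H"
    using j power_minus_mult[of j H] by simp
  also have "\<dots> \<le> H ^ (j - 1) * Jlen m b"
    using m(3) by (rule mult_left_mono) simp
  also have "\<dots> = (\<integral>\<^sup>+ s. H ^ (j - 1) * (Jdens s * indicator {m<..<b} s) \<partial>lebesgue)"
    unfolding Jlen_eq_nn_integral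
    by (intro nn_integral_cmult[symmetric] borel_measurable_times_ennreal Jdens_measurable
        borel_measurable_indicator) simp
  also have "\<dots> \<le> Hnn j u t"
    unfolding Hnn_def
  proof (intro nn_integral_mono)
    fix s
    show "H ^ (j - 1) * (Jdens s * indicator {m<..<b} s)
        \<le> u s * Jdens s * Jlen t s ^ (j - 1) * indicator {t<..<1} s"
    proof (cases "s \<in> {m<..<b}")
      case True
      then have "1 * Jdens s * H ^ (j - 1) \<le> u s * Jdens s * Jlen t s ^ (j - 1)"
        using m u by (intro mult_mono power_mono_ennreal) auto
      then show ?thesis using True m assms(3) by (simp add: ac_simps)
    qed simp
  qed
  finally have "2 ^ j * H ^ j \<le> 2 ^ j * Hnn j u t"
    by (rule mult_left_mono) simp
  moreover have "2 * H = Jlen t b"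
    unfolding H_def by (simp add: mult_2 ennreal_half_plus_half)
  ultimately show ?thesis
    by (metis power_mult_distrib)
qed

lemma SUP_Hnn_eq_Hnn_0:
  assumes u: "u \<in> borel_measurable lebesgue"
  shows "(SUP t\<in>{0<..<1}. Hnn j u t) = Hnn j u 0"
proof (rule antisym)
  show "(SUP t\<in>{0<..<1}. Hnn j u t) \<le> Hnn j u 0"
    by (intro SUP_least antimonoD[OF Hnn_antimono]) simp
next
  define e where "e n = inverse (real (Suc (Suc n)))" for n
  have e: "decseq e" "e \<longlonglongrightarrow> 0" "\<And>n. e n \<in> {0<..<1}"
    unfolding e_def using LIMSEQ_Suc[OF LIMSEQ_inverse_real_of_nat]
    by (auto intro!: decseq_SucI le_imp_inverse_le simp: inverse_less_1_iff simp del: of_nat_Suc)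
  define F where "F n s = u s * Jdens s * Jlen (e n) s ^ (j - 1) * indicator {e n<..<1} s" for n s
  have F_incseq: "incseq F"
    using e(1) unfolding F_def by (intro incseq_SucI le_funI Hnn_integrand_antimono) (simp add: decseq_SucD)
  have F_measurable: "F n \<in> borel_measurable lebesgue" for n
  proof -
    have "(\<lambda>s. Jlen (e n) s ^ (j - 1)) \<in> borel_measurable lebesgue"
      by (intro borel_measurable_lebesgue_of_borel borel_measurable_mono_ennreal monoI
          power_mono_ennreal Jlen_mono) auto
    then show ?thesis
      unfolding F_def using u
      by (intro borel_measurable_times_ennreal Jdens_measurable borel_measurable_indicator) simp_all
  qed
  have lim: "u s * Jdens s * Jlen 0 s ^ (j - 1) * indicator {0<..<1} s \<le> (SUP n. F n s)" for s
  proof (cases "s \<in> {0<..<1}")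
    case True
    then obtain N where N: "e n < s" if "n \<ge> N" for n
      using order_tendstoD(2)[OF e(2), of s] unfolding eventually_sequentially by auto
    have "incseq (\<lambda>n. Jlen (e n) s)"
      using e(1) by (auto simp: incseq_def intro: Jlen_mono decseqD)
    then have "Jlen 0 s ^ (j - 1) = (SUP n. Jlen (e n) s ^ (j - 1))"
      using Jlen_eq_SUP_lower[OF e(1,2), of s] e(3) by (simp add: SUP_power_ennreal)
    then have "u s * Jdens s * Jlen 0 s ^ (j - 1) = (SUP n. u s * Jdens s * Jlen (e n) s ^ (j - 1))"
      by (simp add: SUP_mult_left_ennreal)
    also have "\<dots> \<le> (SUP n. F n s)"
    proof (intro SUP_least)
      fix n
      have "e (max n N) \<le> e n"
        using e(1) by (simp add: decseqD)
      then have "u s * Jdens s * Jlen (e n) s ^ (j - 1) \<le> u s * Jdens s * Jlen (e (max n N)) s ^ (j - 1)"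
        by (intro mult_left_mono power_mono_ennreal Jlen_mono) auto
      also have "\<dots> = F (max n N) s"
        using N[of "max n N"] True unfolding F_def by simp
      also have "\<dots> \<le> (SUP n. F n s)" by (rule SUP_upper) simp
      finally show "u s * Jdens s * Jlen (e n) s ^ (j - 1) \<le> (SUP n. F n s)" .
    qed
    finally show ?thesis using True by simp
  qed simp
  have "Hnn j u 0 \<le> (\<integral>\<^sup>+ s. (SUP n. F n s) \<partial>lebesgue)"
    unfolding Hnn_def by (intro nn_integral_mono lim)
  also have "\<dots> = (SUP n. integral\<^sup>N lebesgue (F n))"
    by (rule nn_integral_monotone_convergence_SUP[OF F_incseq F_measurable])
  also have "\<dots> \<le> (SUP t\<in>{0<..<1}. Hnn j u t)"
    using e(3) unfolding F_def Hnn_def by (intro SUP_least SUP_upper) auto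
  finally show "Hnn j u 0 \<le> (SUP t\<in>{0<..<1}. Hnn j u t)" .
qed


abbreviation norm_Linf_to_X :: "nat \<Rightarrow> ((real \<Rightarrow> ennreal) \<Rightarrow> ennreal) \<Rightarrow> real \<Rightarrow> ennreal" where
  "norm_Linf_to_X j \<rho> a \<equiv> SUP f \<in> {f \<in> borel_measurable M01. Linf (\<lambda>t. ennreal \<bar>f t\<bar>) \<le> 1}.
     \<rho> (Hop j J (\<lambda>t. indicator {0<..<a} t * f t))"

abbreviation norm_X_to_Linf :: "nat \<Rightarrow> ((real \<Rightarrow> ennreal) \<Rightarrow> ennreal) \<Rightarrow> real \<Rightarrow> ennreal" where
  "norm_X_to_Linf j \<rho> a \<equiv> SUP f \<in> {f \<in> borel_measurable M01. \<rho> (\<lambda>t. ennreal \<bar>f t\<bar>) \<le> 1}.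
     Linf (Hop j J (\<lambda>t. indicator {0<..<a} t * f t))"

lemma Hop_restrict_le:
  assumes j: "j \<ge> 1" and f: "Linf (\<lambda>t. ennreal \<bar>f t\<bar>) \<le> 1" and t: "t \<in> {0<..<1}"
  shows "Hop j J (\<lambda>t. indicator {0<..<a} t * f t) t \<le> ennreal (1 / fact (j - 1)) * Jlen t a ^ j"
proof -
  have "AE s in lebesgue. s \<in> {t<..<1} \<longrightarrow> ennreal \<bar>indicator {0<..<a} s * f s\<bar> \<le> indicator {..<a} s"
    using AE_le_Linf[of "\<lambda>t. ennreal \<bar>f t\<bar>"] unfolding AE_M01_iff
  proof (eventually_elim)
    case (elim s)
    then have "s \<in> {0<..<1} \<Longrightarrow> \<bar>f s\<bar> \<le> 1"
      using f by (metis ennreal_le_1 order_trans)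
    then show ?case using t by (auto simp: indicator_def)
  qed
  then have "Hnn j (\<lambda>s. ennreal \<bar>indicator {0<..<a} s * f s\<bar>) t \<le> Jlen t a ^ j"
    by (rule Hnn_le_Jlen_power[OF j])
  then show ?thesis
    using t by (simp add: Hop_eq_Hnn) (rule mult_left_mono, simp_all)
qed

lemma norm_Linf_to_X_le:
  assumes j: "j \<ge> 1" and X: "ri_norm \<rho>" and g: "g \<in> borel_measurable M01"
    and le: "\<And>t. t \<in> {0<..<1} \<Longrightarrow> ennreal (1 / fact (j - 1)) * Jlen t a ^ j \<le> g t"
  shows "norm_Linf_to_X j \<rho> a \<le> \<rho> g"
proof (intro SUP_least)
  fix f assume "f \<in> {f \<in> borel_measurable M01. Linf (\<lambda>t. ennreal \<bar>f t\<bar>) \<le> 1}"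
  then have "Hop j J (\<lambda>t. indicator {0<..<a} t * f t) t \<le> g t" if "t \<in> {0<..<1}" for t
    using Hop_restrict_le[OF j _ that, of f a] le[OF that] by auto
  then show "\<rho> (Hop j J (\<lambda>t. indicator {0<..<a} t * f t)) \<le> \<rho> g"
    by (intro ri_norm_mono[OF X Hop_measurable g])
qed

lemma norm_Linf_to_X_tendsto_0_if_finite:
  assumes j: "j \<ge> 1" and X: "ri_norm \<rho>" and fin: "Jlen 0 1 \<noteq> \<infinity>"
  shows "(norm_Linf_to_X j \<rho> \<longlongrightarrow> 0) (at_right 0)"
proof (rule tendsto_sandwich[OF _ _ tendsto_const])
  define C where "C = ennreal (1 / fact (j - 1)) * Jlen 0 1 ^ (j - 1)"
  have C: "C \<noteq> \<infinity>"
    using fin unfolding C_def by (simp add: ennreal_mult_eq_top_iff power_eq_top_ennreal)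
  show "eventually (\<lambda>a. norm_Linf_to_X j \<rho> a \<le> C * \<rho> (\<lambda>_. 1) * Jlen 0 a) (at_right 0)"
    unfolding eventually_at_right_field
  proof (intro exI[of _ 1] conjI allI impI)
    fix a :: real assume a: "0 < a" "a < 1"
    have "C * Jlen 0 a \<noteq> \<infinity>"
      using C fin Jlen_mono[of 0 0 a 1] a by (auto simp: ennreal_mult_eq_top_iff top_unique)
    moreover have "ennreal (1 / fact (j - 1)) * Jlen t a ^ j \<le> C * Jlen 0 a" if "t \<in> {0<..<1}" for t
    proof -
      have "Jlen t a ^ j = Jlen t a ^ (j - 1) * Jlen t a"
        using j power_minus_mult[of j "Jlen t a"] by simp
      also have "\<dots> \<le> Jlen 0 1 ^ (j - 1) * Jlen 0 a"
        using that a by (intro mult_mono power_mono_ennreal Jlen_mono) auto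
      finally show ?thesis
        unfolding C_def mult.assoc by (rule mult_left_mono) simp
    qed
    ultimately have "norm_Linf_to_X j \<rho> a \<le> \<rho> (\<lambda>_. C * Jlen 0 a)"
      by (intro norm_Linf_to_X_le[OF j X]) auto
    also have "\<dots> = C * \<rho> (\<lambda>_. 1) * Jlen 0 a"
      using ri_norm_const[OF X \<open>C * Jlen 0 a \<noteq> \<infinity>\<close>] by (simp add: ac_simps)
    finally show "norm_Linf_to_X j \<rho> a \<le> C * \<rho> (\<lambda>_. 1) * Jlen 0 a" .
  qed simp
  have "C * \<rho> (\<lambda>_. 1) < \<infinity>"
    using C ri_norm_one_finite[OF X] by (simp add: ennreal_mult_less_top top.not_eq_extremum)
  then show "((\<lambda>a. C * \<rho> (\<lambda>_. 1) * Jlen 0 a) \<longlongrightarrow> 0) (at_right 0)"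
    using ennreal_tendsto_cmult[OF _ Jlen_tendsto_zero[of 0 1]] fin by simp
qed simp

abbreviation tail_weight :: "nat \<Rightarrow> real \<Rightarrow> real \<Rightarrow> ennreal" where
  "tail_weight j a t \<equiv> indicator {0<..<a} t * (\<integral>\<^sup>+ r\<in>{t<..<1}. ennreal (1 / J r) \<partial>lebesgue) ^ j"

lemma tail_weight_eq: "t \<in> {0<..<1} \<Longrightarrow> tail_weight j a t = indicator {0<..<a} t * Jlen t 1 ^ j"
  by (simp add: nn_integral_inverse_J_eq_Jlen)

lemma tail_weight_measurable: "tail_weight j a \<in> borel_measurable M01"
  by (rule measurable_M01_cong[OF tail_weight_eq], assumption)
     (intro borel_measurable_lebesgue_of_borel borel_measurable_times_ennreal borel_measurable_indicator
        borel_measurable_antimono_ennreal antimonoI power_mono_ennreal Jlen_mono, auto)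

lemma norm_Linf_to_X_tendsto_0_if:
  assumes j: "j \<ge> 1" and X: "ri_norm \<rho>"
    and lim: "((\<lambda>a. \<rho> (tail_weight j a)) \<longlongrightarrow> 0) (at_right 0)"
  shows "(norm_Linf_to_X j \<rho> \<longlongrightarrow> 0) (at_right 0)"
proof (rule tendsto_sandwich[OF _ _ tendsto_const])
  define c where "c = ennreal (1 / fact (j - 1))"
  show "eventually (\<lambda>a. norm_Linf_to_X j \<rho> a \<le> c * \<rho> (tail_weight j a)) (at_right 0)"
    unfolding eventually_at_right_field
  proof (intro exI[of _ 1] conjI allI impI)
    fix a :: real assume "0 < a" "a < 1"
    have "c * Jlen t a ^ j \<le> c * tail_weight j a t" if t: "t \<in> {0<..<1}" for t
      using t j \<open>a < 1\<close> by (cases "t < a")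
        (auto simp: nn_integral_inverse_J_eq_Jlen Jlen_empty intro!: mult_left_mono power_mono_ennreal Jlen_mono)
    then have "norm_Linf_to_X j \<rho> a \<le> \<rho> (\<lambda>t. c * tail_weight j a t)"
      unfolding c_def
      by (intro norm_Linf_to_X_le[OF j X] borel_measurable_times_ennreal tail_weight_measurable) auto
    also have "\<dots> = c * \<rho> (tail_weight j a)"
      unfolding c_def by (rule ri_norm_cmult[OF X tail_weight_measurable]) simp
    finally show "norm_Linf_to_X j \<rho> a \<le> c * \<rho> (tail_weight j a)" .
  qed simp
  show "((\<lambda>a. c * \<rho> (tail_weight j a)) \<longlongrightarrow> 0) (at_right 0)"
    using ennreal_tendsto_cmult[OF _ lim, of c] unfolding c_def by simp
qed simp


abbreviation assoc_weight :: "nat \<Rightarrow> real \<Rightarrow> real \<Rightarrow> ennreal" where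
  "assoc_weight j a t \<equiv> indicator {0<..<a} t * ennreal (1 / J t) *
     (\<integral>\<^sup>+ r\<in>{0<..<t}. ennreal (1 / J r) \<partial>lebesgue) ^ (j - 1)"

lemma assoc_weight_eq:
  "t \<in> {0<..<1} \<Longrightarrow> assoc_weight j a t = indicator {0<..<a} t * Jdens t * Jlen 0 t ^ (j - 1)"
  by (simp add: nn_integral_inverse_J_eq_Jlen Jdens_def)

lemma Hnn_cong: "(\<And>s. s \<in> {0<..<1} \<Longrightarrow> u s = v s) \<Longrightarrow> Hnn j u t = Hnn j v t"
  unfolding Hnn_def Jdens_def by (intro nn_integral_cong) (auto simp: indicator_def)

lemma Linf_Hop_restrict_eq:
  assumes f: "f \<in> borel_measurable M01"
  shows "Linf (Hop j J (\<lambda>t. indicator {0<..<a} t * f t))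
    = ennreal (1 / fact (j - 1)) * (\<integral>\<^sup>+ t. ennreal \<bar>f t\<bar> * assoc_weight j a t \<partial>M01)"
proof -
  define u where "u s = indicator {0<..<a} s * (ennreal \<bar>f s\<bar> * indicator {0<..<1} s)" for s
  have u: "u \<in> borel_measurable lebesgue"
  proof -
    have "(\<lambda>s. ennreal \<bar>f s\<bar>) \<in> borel_measurable M01" using f by measurable
    then have "(\<lambda>s. ennreal \<bar>f s\<bar> * indicator {0<..<1} s) \<in> borel_measurable lebesgue"
      unfolding M01_def by (subst (asm) borel_measurable_restrict_space_iff_ennreal) auto
    then show ?thesis
      unfolding u_def by (intro borel_measurable_times_ennreal[OF borel_measurable_indicator]) simp_all
  qed
  have "Linf (Hop j J (\<lambda>t. indicator {0<..<a} t * f t))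
      = (SUP t\<in>{0<..<1}. Hop j J (\<lambda>t. indicator {0<..<a} t * f t) t)"
    by (rule Linf_eq_SUP_antimono) (rule Hop_antimono)
  also have "\<dots> = (SUP t\<in>{0<..<1}. ennreal (1 / fact (j - 1)) * Hnn j u t)"
  proof (intro SUP_cong refl)
    fix t :: real assume "t \<in> {0<..<1}"
    moreover have "Hnn j (\<lambda>s. ennreal \<bar>indicator {0<..<a} s * f s\<bar>) t = Hnn j u t"
      by (rule Hnn_cong) (simp add: u_def abs_mult indicator_def)
    ultimately show "Hop j J (\<lambda>t. indicator {0<..<a} t * f t) t = ennreal (1 / fact (j - 1)) * Hnn j u t"
      by (simp add: Hop_eq_Hnn)
  qed
  also have "\<dots> = ennreal (1 / fact (j - 1)) * Hnn j u 0"
    by (simp add: SUP_mult_left_ennreal[symmetric] SUP_Hnn_eq_Hnn_0[OF u])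
  also have "Hnn j u 0 = (\<integral>\<^sup>+ t. ennreal \<bar>f t\<bar> * assoc_weight j a t \<partial>M01)"
    unfolding Hnn_def nn_integral_M01
  proof (intro nn_integral_cong)
    fix t :: real
    show "u t * Jdens t * Jlen 0 t ^ (j - 1) * indicator {0<..<1} t
      = ennreal \<bar>f t\<bar> * assoc_weight j a t * indicator {0<..<1} t"
      by (cases "t \<in> {0<..<1}") (simp_all add: nn_integral_inverse_J_eq_Jlen Jdens_def u_def ac_simps)
  qed
  finally show ?thesis .
qed

lemma norm_X_to_Linf_eq:
  assumes X: "ri_norm \<rho>"
  shows "norm_X_to_Linf j \<rho> a = ennreal (1 / fact (j - 1)) * assoc_norm \<rho> (assoc_weight j a)"
  by (simp add: Linf_Hop_restrict_eq assoc_norm_eq_SUP_abs[OF X] SUP_mult_left_ennreal)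

lemma norm_X_to_Linf_tendsto_0_iff:
  assumes X: "ri_norm \<rho>"
  shows "(norm_X_to_Linf j \<rho> \<longlongrightarrow> 0) (at_right 0)
    \<longleftrightarrow> ((\<lambda>a. assoc_norm \<rho> (assoc_weight j a)) \<longlongrightarrow> 0) (at_right 0)"
  unfolding norm_X_to_Linf_eq[OF X] by (rule tendsto_cmult_ennreal_iff) simp_all

end

section \<open>Weights bounded below by a multiple of \<open>t\<close>\<close>

lemma linear_lower_bound_of_INF_pos:
  fixes J :: "real \<Rightarrow> real"
  assumes pos: "\<forall>t \<in> {0<..1}. J t > 0" and inf: "(INF t \<in> {0<..1}. J t / t) > 0"
  shows "\<exists>c>0. \<forall>t\<in>{0<..1}. c * t \<le> J t"
proof (intro exI conjI ballI)
  have "bdd_below ((\<lambda>t. J t / t) ` {0<..1})"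
    using pos by (intro bdd_belowI[of _ 0]) auto
  then show "(INF t \<in> {0<..1}. J t / t) * t \<le> J t" if "t \<in> {0<..1}" for t
    using that cINF_lower[of "\<lambda>t. J t / t" "{0<..1}" t] by (simp add: le_divide_eq)
qed (fact inf)

locale lower_bounded_weight = inverse_weight +
  assumes J_lower_bound: "\<exists>c>0. \<forall>t\<in>{0<..1}. c * t \<le> J t"
begin

lemma Jlen_finite:
  assumes "0 < t"
  shows "Jlen t s \<noteq> \<infinity>"
proof -
  obtain c where c: "c > 0" "\<And>r. r \<in> {0<..1} \<Longrightarrow> c * r \<le> J r"
    using J_lower_bound by blast
  have "Jlen t s \<le> (\<integral>\<^sup>+ r. ennreal (1 / (c * t)) * indicator {t<..<1} r \<partial>lebesgue)"
    unfolding Jlen_eq_nn_integral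
  proof (intro nn_integral_mono)
    fix r
    show "Jdens r * indicator {t<..<s} r \<le> ennreal (1 / (c * t)) * indicator {t<..<1} r"
    proof (cases "r \<in> {t<..<s} \<inter> {0<..<1}")
      case True
      then have "c * t \<le> c * r"
        using c by (intro mult_left_mono) auto
      also have "\<dots> \<le> J r"
        using c True by auto
      finally have "c * t \<le> J r" .
      moreover have "0 < c * t"
        using c assms by simp
      ultimately have "1 / J r \<le> 1 / (c * t)"
        by (intro divide_left_mono) auto
      then show ?thesis using True unfolding Jdens_def by (auto intro: ennreal_leI)
    qed (auto simp: Jdens_def)
  qed
  also have "\<dots> = ennreal (1 / (c * t)) * emeasure lebesgue {t<..<1}"
    by (rule nn_integral_cmult_indicator) simp
  also have "\<dots> < \<infinity>"
    by (cases "t \<le> 1") (auto simp: ennreal_mult_less_top)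
  finally show ?thesis by simp
qed

lemma Jlen_0_infinite:
  assumes "Jlen 0 1 = \<infinity>" "0 < t" "t \<le> 1"
  shows "Jlen 0 t = \<infinity>"
proof -
  have "Jlen 0 t + Jlen t 1 = \<infinity>"
    using Jlen_add[of 0 t 1] assms by simp
  then show ?thesis
    using Jlen_finite[of t 1] assms(2) by (simp add: ennreal_add_eq_top)
qed

text \<open>Near \<open>0\<close> the tail \<open>Jlen t 1\<close> is at most twice \<open>Jlen t b\<close>, since \<open>Jlen t b\<close> blows up while
  \<open>Jlen b 1\<close> stays finite; the halving bound then compares it with \<open>Hop\<close> applied to the indicator of \<open>(0,b)\<close>.\<close>
lemma tail_weight_le_Hop:
  assumes j: "j \<ge> 1" and X: "ri_norm \<rho>" and inf: "Jlen 0 1 = \<infinity>" and b: "0 < b" "b < 1"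
  shows "eventually (\<lambda>a. \<rho> (tail_weight j a)
    \<le> ennreal (fact (j - 1)) * 4 ^ j * \<rho> (Hop j J (\<lambda>t. indicator {0<..<b} t * 1))) (at_right 0)"
proof -
  define K where "K = ennreal (fact (j - 1)) * 4 ^ j"
  have "eventually (\<lambda>t. Jlen b 1 < Jlen t b) (at_right 0)"
    using Jlen_tendsto_lower[of b 0] Jlen_0_infinite[OF inf b(1)] Jlen_finite[OF b(1), of 1] b
    by (intro order_tendstoD(1)) (auto simp: top.not_eq_extremum)
  then obtain a0 where a0: "0 < a0" "\<And>t. 0 < t \<Longrightarrow> t < a0 \<Longrightarrow> Jlen b 1 < Jlen t b"
    unfolding eventually_at_right_field by auto
  have pointwise: "tail_weight j a t \<le> K * Hop j J (\<lambda>t. indicator {0<..<b} t * 1) t"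
    if a: "a \<le> a0" and t: "t \<in> {0<..<1}" for a t
  proof (cases "t < a")
    case True
    with a a0(2)[of t] t have less: "Jlen b 1 < Jlen t b" by auto
    then have "t < b" by (metis Jlen_empty not_less not_less_zero)
    have "Jlen t 1 \<le> 2 * Jlen t b"
      using Jlen_add[of t b 1] \<open>t < b\<close> b less by (simp add: mult_2 less_imp_le)
    then have "Jlen t 1 ^ j \<le> 2 ^ j * Jlen t b ^ j"
      by (metis power_mono_ennreal power_mult_distrib)
    also have "\<dots> \<le> 2 ^ j * (2 ^ j * Hnn j (\<lambda>s. ennreal \<bar>indicator {0<..<b} s * 1\<bar>) t)"
      using t \<open>t < b\<close> b Jlen_finite[of t b]
      by (intro mult_left_mono Jlen_power_le_Hnn j) (auto simp: indicator_def)
    also have "\<dots> = K * Hop j J (\<lambda>t. indicator {0<..<b} t * 1) t"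
    proof -
      define h where "h = Hnn j (\<lambda>s. ennreal \<bar>indicator {0<..<b} s * 1\<bar>) t"
      have "ennreal (fact (j - 1)) * ennreal (1 / fact (j - 1)) = 1"
        by (simp add: ennreal_mult''[symmetric])
      moreover have "(4::ennreal) ^ j = 2 ^ j * 2 ^ j"
        by (simp add: power_mult_distrib[symmetric])
      moreover have "K * (ennreal (1 / fact (j - 1)) * h)
          = (ennreal (fact (j - 1)) * ennreal (1 / fact (j - 1))) * (4 ^ j * h)"
        unfolding K_def by (simp only: ac_simps)
      ultimately show ?thesis
        unfolding Hop_eq_Hnn[OF t] h_def[symmetric] by (simp add: ac_simps)
    qed
    finally show ?thesis using True t by (simp add: nn_integral_inverse_J_eq_Jlen)
  qed simp
  show ?thesis
    unfolding eventually_at_right_field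
  proof (intro exI[of _ a0] conjI a0 allI impI, fold K_def)
    fix a assume "0 < a" "a < a0"
    then have "\<rho> (tail_weight j a) \<le> \<rho> (\<lambda>t. K * Hop j J (\<lambda>t. indicator {0<..<b} t * 1) t)"
      using pointwise by (intro ri_norm_mono[OF X tail_weight_measurable]
          borel_measurable_times_ennreal borel_measurable_const Hop_measurable) auto
    also have "\<dots> = K * \<rho> (Hop j J (\<lambda>t. indicator {0<..<b} t * 1))"
      unfolding K_def by (rule ri_norm_cmult[OF X Hop_measurable]) (simp add: ennreal_mult_eq_top_iff power_eq_top_ennreal)
    finally show "\<rho> (tail_weight j a) \<le> K * \<rho> (Hop j J (\<lambda>t. indicator {0<..<b} t * 1))" .
  qed
qed

lemma norm_Linf_to_X_tendsto_0_only_if: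
  assumes j: "j \<ge> 1" and X: "ri_norm \<rho>" and inf: "Jlen 0 1 = \<infinity>"
    and lim: "(norm_Linf_to_X j \<rho> \<longlongrightarrow> 0) (at_right 0)"
  shows "((\<lambda>a. \<rho> (tail_weight j a)) \<longlongrightarrow> 0) (at_right 0)"
proof (rule order_tendstoI)
  fix e :: ennreal assume "0 < e"
  define K where "K = ennreal (fact (j - 1)) * 4 ^ j"
  have "K < top"
    unfolding K_def by (simp add: ennreal_mult_less_top power_less_top_ennreal)
  from ennreal_tendsto_cmult[OF this lim]
  have "((\<lambda>b. K * norm_Linf_to_X j \<rho> b) \<longlongrightarrow> 0) (at_right 0)"
    by simp
  then have "eventually (\<lambda>b. K * norm_Linf_to_X j \<rho> b < e) (at_right 0)"
    using \<open>0 < e\<close> by (rule order_tendstoD)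
  moreover have "eventually (\<lambda>b. b < 1) (at_right (0::real))"
    unfolding eventually_at_right_field by (intro exI[of _ 1]) auto
  ultimately have "eventually (\<lambda>b. 0 < b \<and> b < 1 \<and> K * norm_Linf_to_X j \<rho> b < e) (at_right 0)"
    using eventually_at_right_less[of 0] by eventually_elim auto
  then obtain b where b: "0 < b" "b < 1" and small: "K * norm_Linf_to_X j \<rho> b < e"
    by (auto dest: eventually_happens)
  have "\<rho> (Hop j J (\<lambda>t. indicator {0<..<b} t * 1)) \<le> norm_Linf_to_X j \<rho> b"
    using Linf_const_le[of 1] by (intro SUP_upper) auto
  then have "K * \<rho> (Hop j J (\<lambda>t. indicator {0<..<b} t * 1)) < e"
    using small by (meson mult_left_mono le_less_trans zero_le)
  with tail_weight_le_Hop[OF j X inf b] show "eventually (\<lambda>a. \<rho> (tail_weight j a) < e) (at_right 0)"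
    unfolding K_def by (auto elim: eventually_mono)
qed simp

lemma norm_X_to_Linf_not_tendsto_0:
  assumes X: "ri_norm \<rho>" and inf: "Jlen 0 1 = \<infinity>"
  shows "\<not> (norm_X_to_Linf j \<rho> \<longlongrightarrow> 0) (at_right 0)"
proof
  have "assoc_norm \<rho> (assoc_weight j a) = \<infinity>" if a: "0 < a" "a < 1" for a
  proof (rule assoc_norm_infinite[OF X])
    show "assoc_weight j a \<in> borel_measurable M01"
      by (rule measurable_M01_cong[OF assoc_weight_eq], assumption)
         (intro borel_measurable_times_ennreal borel_measurable_indicator Jdens_measurable
            borel_measurable_lebesgue_of_borel borel_measurable_mono_ennreal monoI power_mono_ennreal
            Jlen_mono, auto)
    have "Jdens t * indicator {0<..<a} t \<le> assoc_weight j a t * indicator {0<..<1} t" for t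
    proof (cases "t \<in> {0<..<a}")
      case True
      then have "1 \<le> Jlen 0 t ^ (j - 1)"
        using Jlen_0_infinite[OF inf] a by (auto intro!: one_le_power)
      then have "Jdens t * 1 \<le> Jdens t * Jlen 0 t ^ (j - 1)"
        by (rule mult_left_mono) simp
      then show ?thesis
        using True a by (simp add: nn_integral_inverse_J_eq_Jlen Jdens_def)
    qed simp
    then have "Jlen 0 a \<le> (\<integral>\<^sup>+ t. assoc_weight j a t \<partial>M01)"
      unfolding Jlen_eq_nn_integral nn_integral_M01 by (rule nn_integral_mono)
    then show "(\<integral>\<^sup>+ t. assoc_weight j a t \<partial>M01) = \<infinity>"
      using Jlen_0_infinite[OF inf] a by (simp add: top_unique)
  qed
  then have "eventually (\<lambda>a. norm_X_to_Linf j \<rho> a = \<infinity>) (at_right 0)"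
    unfolding eventually_at_right_field
    by (intro exI[of _ 1]) (simp add: norm_X_to_Linf_eq[OF X] ennreal_mult_top)
  moreover assume "(norm_X_to_Linf j \<rho> \<longlongrightarrow> 0) (at_right 0)"
  then have "eventually (\<lambda>a. norm_X_to_Linf j \<rho> a < 1) (at_right 0)"
    by (rule order_tendstoD) simp
  ultimately have "eventually (\<lambda>a. False) (at_right (0::real))"
    by eventually_elim (metis infinity_ennreal_def top.extremum_strict)
  then show False by simp
qed

end

theorem theorem7p5:
  fixes j :: nat and J :: "real \<Rightarrow> real" and \<rho> :: "(real \<Rightarrow> ennreal) \<Rightarrow> ennreal"
  assumes j: "j \<ge> 1"
    and Jmeas: "J \<in> borel_measurable (restrict_space lebesgue {0<..1})"
    and Jpos: "\<forall>t \<in> {0<..1}. J t > 0"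
    and Jinf: "(INF t \<in> {0<..1}. J t / t) > 0"
    and X: "ri_norm \<rho>"
  shows
    "((\<integral>\<^sup>+ r \<in> {0<..<1}. ennreal (1 / J r) \<partial>lebesgue) < \<infinity> \<longrightarrow>
        ((\<lambda>a. SUP f \<in> {f \<in> borel_measurable M01. Linf (\<lambda>t. ennreal \<bar>f t\<bar>) \<le> 1}.
               \<rho> (Hop j J (\<lambda>t. indicator {0<..<a} t * f t))) \<longlongrightarrow> 0) (at_right 0))
   \<and> ((\<integral>\<^sup>+ r \<in> {0<..<1}. ennreal (1 / J r) \<partial>lebesgue) = \<infinity> \<longrightarrow>
        (((\<lambda>a. SUP f \<in> {f \<in> borel_measurable M01. Linf (\<lambda>t. ennreal \<bar>f t\<bar>) \<le> 1}.
               \<rho> (Hop j J (\<lambda>t. indicator {0<..<a} t * f t))) \<longlongrightarrow> 0) (at_right 0)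
         \<longleftrightarrow>
         ((\<lambda>a. \<rho> (\<lambda>t. indicator {0<..<a} t *
                  (\<integral>\<^sup>+ r \<in> {t<..<1}. ennreal (1 / J r) \<partial>lebesgue) ^ j)) \<longlongrightarrow> 0) (at_right 0)))
   \<and> ((((\<lambda>a. SUP f \<in> {f \<in> borel_measurable M01. \<rho> (\<lambda>t. ennreal \<bar>f t\<bar>) \<le> 1}.
               Linf (Hop j J (\<lambda>t. indicator {0<..<a} t * f t))) \<longlongrightarrow> 0) (at_right 0))
        \<longleftrightarrow>
        ((\<lambda>a. assoc_norm \<rho> (\<lambda>t. indicator {0<..<a} t * ennreal (1 / J t) *
                  (\<integral>\<^sup>+ r \<in> {0<..<t}. ennreal (1 / J r) \<partial>lebesgue) ^ (j - 1))) \<longlongrightarrow> 0) (at_right 0))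
   \<and> ((\<integral>\<^sup>+ r \<in> {0<..<1}. ennreal (1 / J r) \<partial>lebesgue) = \<infinity> \<longrightarrow>
        \<not> ((\<lambda>a. SUP f \<in> {f \<in> borel_measurable M01. \<rho> (\<lambda>t. ennreal \<bar>f t\<bar>) \<le> 1}.
               Linf (Hop j J (\<lambda>t. indicator {0<..<a} t * f t))) \<longlongrightarrow> 0) (at_right 0))"
proof -
  interpret lower_bounded_weight J
    using Jmeas linear_lower_bound_of_INF_pos[OF Jpos Jinf] by unfold_locales
  have total: "(\<integral>\<^sup>+ r \<in> {0<..<1}. ennreal (1 / J r) \<partial>lebesgue) = Jlen 0 1"
    by (rule nn_integral_inverse_J_eq_Jlen) simp_all
  show ?thesis
    unfolding total
    using norm_Linf_to_X_tendsto_0_if_finite[OF j X]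
      norm_Linf_to_X_tendsto_0_if[OF j X] norm_Linf_to_X_tendsto_0_only_if[OF j X]
      norm_X_to_Linf_tendsto_0_iff[OF X, of j] norm_X_to_Linf_not_tendsto_0[OF X, of j]
    by (auto simp: less_top[symmetric])
qed

end
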